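(* Assume $\psi$ has conductor $\mathfrak o$ and the Haar measure on $F$ gives $\mathfrak o$ volume $1$. Let $(\pi,V)$ be a smooth representation of $\mathrm{GSp}(4,F)$ and $p:V\to V_{Z^J,\psi}$ the projection. For every $w\in V_{Z^J,\psi}$ there exists a unique $v\in V$ such that: (i) $p(v)=w$; (ii) $\pi(z(x))v=v$ for all $x\in\mathfrak o$; (iii) $\int_{\mathfrak p^{-1}}\pi(z(x))v\,dx=0$; (iv) $\pi(d(c))v=v$ for all $c\in\mathfrak o^\times$.
   Context: $F$ non-archimedean local field of characteristic zero with ring of integers $\mathfrak o$ and maximal ideal $\mathfrak p$; $\psi$ a non-trivial character of $F$; conductor $\mathfrak o$ means $\psi$ is trivial on $\mathfrak o$ but not on $\mathfrak p^{-1}$. $\mathrm{GSp}(4,F)$: similitudes of $J=\begin{bmatrix}&&&1\\&&1\\&-1\\-1\end{bmatrix}$. $d(c)=\mathrm{diag}(1,1,c,c)$, $z(x)=1_4+xE_{14}$ (identity matrix with $x$ in position $(1,4)$), $Z^J=\{z(x)\}$, $V_{Z^J,\psi}=V/\mathrm{span}\{\pi(z(x))v-\psi(x)v: x\in F,v\in V\}$. *)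

theory Defs
  imports "HOL-Analysis.Analysis"
begin

text \<open>val is a normalized discrete valuation on F (its value at 0 is irrelevant).
  pp val n is the fractional ideal p^n = {x. x = 0 or val x >= n}; pp val 0 is the ring of integers o.\<close>

definition pp :: "('a::field \<Rightarrow> int) \<Rightarrow> int \<Rightarrow> 'a set" where
  "pp val n = {x. x = 0 \<or> n \<le> val x}"

definition is_reps :: "('a::field \<Rightarrow> int) \<Rightarrow> int \<Rightarrow> int \<Rightarrow> 'a set \<Rightarrow> bool" where
  "is_reps val m n R \<longleftrightarrow> finite R \<and> R \<subseteq> pp val m \<and>
     (\<forall>x\<in>pp val m. \<exists>!r\<in>R. x - r \<in> pp val n)"

definition nonarch_local_field :: "('a::field_char_0 \<Rightarrow> int) \<Rightarrow> bool" where
  "nonarch_local_field val \<longleftrightarrow>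
     (\<forall>x y. x \<noteq> 0 \<and> y \<noteq> 0 \<longrightarrow> val (x * y) = val x + val y) \<and>
     (\<forall>x y. x \<noteq> 0 \<and> y \<noteq> 0 \<and> x + y \<noteq> 0 \<longrightarrow> min (val x) (val y) \<le> val (x + y)) \<and>
     (\<forall>n. \<exists>x. x \<noteq> 0 \<and> val x = n) \<and>
     (\<forall>s::nat \<Rightarrow> 'a. (\<forall>n. \<exists>N. \<forall>i\<ge>N. \<forall>j\<ge>N. s i - s j \<in> pp val n) \<longrightarrow>
        (\<exists>L. \<forall>n. \<exists>N. \<forall>i\<ge>N. s i - L \<in> pp val n)) \<and>
     (\<exists>R. is_reps val 0 1 R)"

definition units_o :: "('a::field \<Rightarrow> int) \<Rightarrow> 'a set" where
  "units_o val = {c. c \<noteq> 0 \<and> val c = 0}"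

definition conductor_o_char :: "('a::field \<Rightarrow> int) \<Rightarrow> ('a \<Rightarrow> complex) \<Rightarrow> bool" where
  "conductor_o_char val \<psi> \<longleftrightarrow>
     (\<forall>x y. \<psi> (x + y) = \<psi> x * \<psi> y) \<and> (\<forall>x. \<psi> x \<noteq> 0) \<and>
     (\<forall>x\<in>pp val 0. \<psi> x = 1) \<and> (\<exists>x\<in>pp val (-1). \<psi> x \<noteq> 1)"

text \<open>Integral over p^m of a locally constant V-valued function, w.r.t. the Haar measure
  with vol(o) = 1 (so vol(p^n) = 1/[o:p^n] for n >= 0): choose n so large that f is constant
  on cosets of p^n in p^m and sum over coset representatives.\<close>

definition haar_int :: "('a::field \<Rightarrow> int) \<Rightarrow> (complex \<Rightarrow> 'v \<Rightarrow> 'v) \<Rightarrow> int \<Rightarrow> ('a \<Rightarrow> 'v::ab_group_add) \<Rightarrow> 'v" where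
  "haar_int val sc m f = (THE I. \<exists>n. max 0 m \<le> n \<and>
      (\<forall>x\<in>pp val m. \<forall>y\<in>pp val n. f (x + y) = f x) \<and>
      (\<forall>R S. is_reps val m n R \<longrightarrow> is_reps val 0 n S \<longrightarrow>
          I = (\<Sum>r\<in>R. sc (1 / of_nat (card S)) (f r))))"

text \<open>Indices of the numeral type 4 are 1,2,3 and 4 (= 0 in that type).\<close>

definition Jmat :: "'a::comm_ring_1 ^ 4 ^ 4" where
  "Jmat = (\<chi> i j. if i = 1 \<and> j = 4 then 1 else if i = 2 \<and> j = 3 then 1
                  else if i = 3 \<and> j = 2 then -1 else if i = 4 \<and> j = 1 then -1 else 0)"

definition GSp4 :: "('a::field ^ 4 ^ 4) set" where
  "GSp4 = {g. \<exists>s. s \<noteq> 0 \<and> transpose g ** Jmat ** g = (\<chi> i j. s * Jmat $ i $ j)}"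

definition dmat :: "'a::field \<Rightarrow> 'a ^ 4 ^ 4" where
  "dmat c = (\<chi> i j. if i = j then (if i = 3 \<or> i = 4 then c else 1) else 0)"

definition zmat :: "'a::field \<Rightarrow> 'a ^ 4 ^ 4" where
  "zmat x = (\<chi> i j. if i = j then 1 else if i = 1 \<and> j = 4 then x else 0)"

definition smooth_rep :: "('a::field \<Rightarrow> int) \<Rightarrow> (complex \<Rightarrow> 'v \<Rightarrow> 'v) \<Rightarrow> ('a ^ 4 ^ 4 \<Rightarrow> 'v \<Rightarrow> 'v::ab_group_add) \<Rightarrow> bool" where
  "smooth_rep val sc \<pi> \<longleftrightarrow>
     vector_space sc \<and>
     (\<forall>g\<in>GSp4. Vector_Spaces.linear sc sc (\<pi> g)) \<and>
     \<pi> (mat 1) = id \<and>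
     (\<forall>g\<in>GSp4. \<forall>h\<in>GSp4. \<pi> (g ** h) = \<pi> g \<circ> \<pi> h) \<and>
     (\<forall>v. \<exists>n\<ge>1. \<forall>g\<in>GSp4. (\<forall>i j. (g - mat 1) $ i $ j \<in> pp val n) \<longrightarrow> \<pi> g v = v)"

definition ZJ_kernel :: "(complex \<Rightarrow> 'v \<Rightarrow> 'v) \<Rightarrow> ('a::field ^ 4 ^ 4 \<Rightarrow> 'v \<Rightarrow> 'v::ab_group_add) \<Rightarrow> ('a \<Rightarrow> complex) \<Rightarrow> 'v set" where
  "ZJ_kernel sc \<pi> \<psi> = module.span sc {\<pi> (zmat x) v - sc (\<psi> x) v | x v. True}"

definition ZJ_proj :: "(complex \<Rightarrow> 'v \<Rightarrow> 'v) \<Rightarrow> ('a::field ^ 4 ^ 4 \<Rightarrow> 'v \<Rightarrow> 'v::ab_group_add) \<Rightarrow> ('a \<Rightarrow> complex) \<Rightarrow> 'v \<Rightarrow> 'v set" where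
  "ZJ_proj sc \<pi> \<psi> v = {v + u | u. u \<in> ZJ_kernel sc \<pi> \<psi>}"

definition ZJ_coinv :: "(complex \<Rightarrow> 'v \<Rightarrow> 'v) \<Rightarrow> ('a::field ^ 4 ^ 4 \<Rightarrow> 'v \<Rightarrow> 'v::ab_group_add) \<Rightarrow> ('a \<Rightarrow> complex) \<Rightarrow> 'v set set" where
  "ZJ_coinv sc \<pi> \<psi> = range (ZJ_proj sc \<pi> \<psi>)"

end

theory Submission
  imports Defs
begin

text \<open>
  Let v0 be any preimage of w, fixed by z(p^K) and by d(1 + p^K). Averaging
  psi(-x) pi(d(c) z(x)) v0 over x in p^-K / p^K gives a vector V(c) on which z(y) acts
  by psi(c y) for y in p^-K. Modulo the kernel of p we have V(1) = v0, while V(c) = 0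
  for units c not in 1 + p^K, since then z(y) acts on V(c) by a character different
  from psi. Summing V(c) over c in o^x / (1 + p^K) therefore gives a lift of w that is
  d(o^x)-invariant, fixed by z(o), and has vanishing integral over p^-1, because
  the sum of psi(t c) over t in p^-1 / o vanishes for every unit c.

  For uniqueness let u be the difference of two such lifts. As u lies in the kernel
  of p, its twisted averages, the sums of psi(-x) pi(z(x)) u over x in p^-m / o, vanish
  for large m. Applying pi(d(c)) and summing over units c turns the twist into a
  Ramanujan sum, leaving a nonzero multiple of u minus a multiple of the integral of
  pi(z(x)) u over p^-1; hence u = 0.
\<close>

lemma zmat_mult: "zmat x ** zmat y = zmat (x + y)"
  by (simp add: zmat_def matrix_matrix_mult_def vec_eq_iff sum_4 forall_4)

lemma dmat_mult: "dmat x ** dmat y = dmat (x * y)"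
  by (simp add: dmat_def matrix_matrix_mult_def vec_eq_iff sum_4 forall_4)

lemma zmat_dmat_commute: "zmat y ** dmat c = dmat c ** zmat (c * y)"
  by (simp add: zmat_def dmat_def matrix_matrix_mult_def vec_eq_iff sum_4 forall_4)

lemma dmat_1: "dmat 1 = mat 1"
  by (simp add: dmat_def mat_def vec_eq_iff forall_4)

lemma zmat_in_GSp4: "zmat x \<in> GSp4"
  unfolding GSp4_def mem_Collect_eq
  by (rule exI[of _ 1])
     (simp add: zmat_def Jmat_def transpose_def matrix_matrix_mult_def vec_eq_iff sum_4 forall_4)

lemma dmat_in_GSp4: "c \<noteq> 0 \<Longrightarrow> dmat c \<in> GSp4"
  unfolding GSp4_def mem_Collect_eq
  by (rule exI[of _ c])
     (simp add: dmat_def Jmat_def transpose_def matrix_matrix_mult_def vec_eq_iff sum_4 forall_4)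

lemma zmat_minus_1_nth: "(zmat x - mat 1) $ i $ j = (if i = 1 \<and> j = 4 then x else 0)"
  using exhaust_4[of i] exhaust_4[of j] by (auto simp: zmat_def mat_def)

lemma dmat_minus_1_nth:
  "(dmat c - mat 1) $ i $ j = (if i = j \<and> (i = 3 \<or> i = 4) then c - 1 else 0)"
  using exhaust_4[of i] exhaust_4[of j] by (auto simp: dmat_def mat_def)

section \<open>Valuation ideals and their coset representatives\<close>

locale nonarch_valuation =
  fixes val :: "'a::field_char_0 \<Rightarrow> int"
  assumes nonarch_local_field: "nonarch_local_field val"
begin

lemma val_mult: "x \<noteq> 0 \<Longrightarrow> y \<noteq> 0 \<Longrightarrow> val (x * y) = val x + val y"
  using nonarch_local_field unfolding nonarch_local_field_def by blast

lemma val_add_ge: "x \<noteq> 0 \<Longrightarrow> y \<noteq> 0 \<Longrightarrow> x + y \<noteq> 0 \<Longrightarrow> min (val x) (val y) \<le> val (x + y)"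
  using nonarch_local_field unfolding nonarch_local_field_def by blast

lemma val_surj: "\<exists>x. x \<noteq> 0 \<and> val x = n"
  using nonarch_local_field unfolding nonarch_local_field_def by blast

lemma residue_field_reps: "\<exists>R. is_reps val 0 1 R"
  using nonarch_local_field unfolding nonarch_local_field_def by blast

lemma val_1: "val 1 = 0"
  using val_mult[of 1 1] by simp

lemma val_minus: "x \<noteq> 0 \<Longrightarrow> val (- x) = val x"
  using val_mult[of "-1" x] val_mult[of "-1" "-1"] by (simp add: val_1)

lemma val_inverse: "x \<noteq> 0 \<Longrightarrow> val (inverse x) = - val x"
  using val_mult[of x "inverse x"] by (simp add: val_1)

lemma mem_pp_iff: "x \<noteq> 0 \<Longrightarrow> x \<in> pp val n \<longleftrightarrow> n \<le> val x"
  by (simp add: pp_def)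

lemma zero_mem_pp [simp]: "0 \<in> pp val n"
  by (simp add: pp_def)

lemma minus_mem_pp_iff [simp]: "- x \<in> pp val n \<longleftrightarrow> x \<in> pp val n"
  by (cases "x = 0") (auto simp: pp_def val_minus)

lemma add_mem_pp: "x \<in> pp val n \<Longrightarrow> y \<in> pp val n \<Longrightarrow> x + y \<in> pp val n"
  using val_add_ge[of x y] by (cases "x = 0 \<or> y = 0 \<or> x + y = 0") (auto simp: pp_def)

lemma diff_mem_pp: "x \<in> pp val n \<Longrightarrow> y \<in> pp val n \<Longrightarrow> x - y \<in> pp val n"
  using add_mem_pp[of x n "- y"] by simp

lemma diff_mem_pp_commute: "x - y \<in> pp val n \<Longrightarrow> y - x \<in> pp val n"
  using minus_mem_pp_iff[of "x - y" n] by simp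

lemma pp_mono: "m \<le> n \<Longrightarrow> x \<in> pp val n \<Longrightarrow> x \<in> pp val m"
  by (auto simp: pp_def)

lemma mult_mem_pp: "x \<in> pp val a \<Longrightarrow> y \<in> pp val b \<Longrightarrow> x * y \<in> pp val (a + b)"
  by (cases "x = 0 \<or> y = 0") (auto simp: pp_def val_mult)

lemma divide_mem_pp: "x \<in> pp val a \<Longrightarrow> c \<noteq> 0 \<Longrightarrow> x / c \<in> pp val (a - val c)"
  using mult_mem_pp[of x a "inverse c" "- val c"] by (simp add: mem_pp_iff val_inverse divide_inverse)

lemma mult_left_mem_pp: "x \<in> pp val a \<Longrightarrow> c \<noteq> 0 \<Longrightarrow> c * x \<in> pp val (val c + a)"
  using mult_mem_pp[of c "val c" x a] by (simp add: mem_pp_iff)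

lemma one_mem_pp_0: "1 \<in> pp val 0"
  by (simp add: pp_def val_1)

lemma one_not_mem_pp_1: "1 \<notin> pp val 1"
  by (simp add: pp_def val_1)

lemma not_mem_ppD: "x \<notin> pp val n \<Longrightarrow> x \<noteq> 0 \<and> val x < n"
  by (auto simp: pp_def)

lemma units_o_iff: "c \<in> pp val 0 \<Longrightarrow> c \<in> units_o val \<longleftrightarrow> c \<notin> pp val 1"
  by (auto simp: units_o_def pp_def)

lemma units_o_nonzero: "c \<in> units_o val \<Longrightarrow> c \<noteq> 0"
  by (simp add: units_o_def)

lemma units_o_val: "c \<in> units_o val \<Longrightarrow> val c = 0"
  by (simp add: units_o_def)

lemma units_o_mem_pp_0: "c \<in> units_o val \<Longrightarrow> c \<in> pp val 0"
  by (simp add: units_o_def pp_def)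

lemma units_o_inverse: "c \<in> units_o val \<Longrightarrow> inverse c \<in> units_o val"
  by (simp add: units_o_def val_inverse)

lemma units_o_mult_mem_pp_iff: "c \<in> units_o val \<Longrightarrow> c * x \<in> pp val n \<longleftrightarrow> x \<in> pp val n"
  by (cases "x = 0") (auto simp: units_o_def pp_def val_mult)

lemma one_plus_mem_units_o: "x \<in> pp val 1 \<Longrightarrow> 1 + x \<in> units_o val"
proof -
  assume x: "x \<in> pp val 1"
  have "1 + x \<in> pp val 0"
    using add_mem_pp[OF one_mem_pp_0 pp_mono[OF _ x]] by simp
  moreover have "1 + x \<notin> pp val 1"
    using diff_mem_pp[of "1 + x" 1 x] x one_not_mem_pp_1 by auto
  ultimately show ?thesis using units_o_iff by blast
qed

lemma is_repsD:
  assumes "is_reps val a b R"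
  shows "finite R" "R \<subseteq> pp val a" "\<And>x. x \<in> pp val a \<Longrightarrow> \<exists>!r\<in>R. x - r \<in> pp val b"
  using assms by (auto simp: is_reps_def)

lemma is_reps_nonempty: "is_reps val a b R \<Longrightarrow> R \<noteq> {}"
  unfolding is_reps_def using zero_mem_pp by blast

lemma card_is_reps_nonzero: "is_reps val a b R \<Longrightarrow> card R \<noteq> 0"
  using is_repsD(1) is_reps_nonempty by auto

lemma is_reps_unique:
  "is_reps val a b R \<Longrightarrow> x \<in> pp val a \<Longrightarrow> r \<in> R \<Longrightarrow> r' \<in> R \<Longrightarrow>
   x - r \<in> pp val b \<Longrightarrow> x - r' \<in> pp val b \<Longrightarrow> r = r'"
  unfolding is_reps_def by blast

lemma is_reps_eq:
  "is_reps val a b R \<Longrightarrow> r \<in> R \<Longrightarrow> r' \<in> R \<Longrightarrow> r - r' \<in> pp val b \<Longrightarrow> r = r'"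
  using is_reps_unique[of a b R r r r'] by (auto simp: is_reps_def)

lemma is_reps_singleton: "is_reps val a a R \<Longrightarrow> \<exists>r. R = {r}"
proof -
  assume R: "is_reps val a a R"
  obtain r where r: "r \<in> R" using is_reps_nonempty[OF R] by blast
  have "r' = r" if "r' \<in> R" for r'
    using is_reps_eq[OF R that r] is_repsD(2)[OF R] that r diff_mem_pp by blast
  with r show ?thesis by blast
qed

lemma is_reps_scale:
  assumes R: "is_reps val a b R" and c: "c \<noteq> 0"
  shows "is_reps val (val c + a) (val c + b) ((*) c ` R)"
  unfolding is_reps_def
proof (intro conjI ballI)
  show "finite ((*) c ` R)" using is_repsD[OF R] by simp
  show "(*) c ` R \<subseteq> pp val (val c + a)" using is_repsD(2)[OF R] mult_left_mem_pp[OF _ c] by auto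
  fix x assume x: "x \<in> pp val (val c + a)"
  have xc: "x / c \<in> pp val a" using divide_mem_pp[OF x c] by simp
  obtain r where r: "r \<in> R" "x / c - r \<in> pp val b" using is_repsD(3)[OF R xc] by blast
  have "c * (x / c - r) \<in> pp val (val c + b)" using mult_left_mem_pp[OF r(2) c] .
  hence e: "x - c * r \<in> pp val (val c + b)" using c by (simp add: algebra_simps)
  show "\<exists>!y\<in>(*) c ` R. x - y \<in> pp val (val c + b)"
  proof (rule ex1I[of _ "c * r"])
    show "c * r \<in> (*) c ` R \<and> x - c * r \<in> pp val (val c + b)" using r e by auto
    fix y assume y: "y \<in> (*) c ` R \<and> x - y \<in> pp val (val c + b)"
    then obtain r' where r': "r' \<in> R" "y = c * r'" by auto
    have "(x - c * r') / c \<in> pp val b"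
      using divide_mem_pp[OF _ c, of "x - c * r'" "val c + b"] y r' by simp
    hence "x / c - r' \<in> pp val b" using c by (simp add: field_simps)
    hence "r' = r" using is_reps_unique[OF R xc r'(1) r(1)] r by blast
    thus "y = c * r" using r' by simp
  qed
qed

lemma is_reps_unit_scale:
  "is_reps val a b R \<Longrightarrow> c \<in> units_o val \<Longrightarrow> is_reps val a b ((*) c ` R)"
  using is_reps_scale[of a b R c] units_o_nonzero units_o_val by simp

lemma is_reps_translate:
  assumes R: "is_reps val a b R" and t: "t \<in> pp val a"
  shows "is_reps val a b ((+) t ` R)"
  unfolding is_reps_def
proof (intro conjI ballI)
  show "finite ((+) t ` R)" using is_repsD[OF R] by simp
  show "(+) t ` R \<subseteq> pp val a" using is_repsD(2)[OF R] add_mem_pp[OF t] by auto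
  fix x assume x: "x \<in> pp val a"
  have xt: "x - t \<in> pp val a" using diff_mem_pp[OF x t] .
  obtain r where r: "r \<in> R" "x - t - r \<in> pp val b" using is_repsD(3)[OF R xt] by blast
  show "\<exists>!y\<in>(+) t ` R. x - y \<in> pp val b"
  proof (rule ex1I[of _ "t + r"])
    show "t + r \<in> (+) t ` R \<and> x - (t + r) \<in> pp val b" using r by (auto simp: algebra_simps)
    fix y assume y: "y \<in> (+) t ` R \<and> x - y \<in> pp val b"
    then obtain r' where r': "r' \<in> R" "y = t + r'" by auto
    have "x - t - r' \<in> pp val b" using y r' by (simp add: algebra_simps)
    hence "r' = r" using is_reps_unique[OF R xt r'(1) r(1)] r by blast
    thus "y = t + r" using r' by simp
  qed
qed

lemma is_reps_restrict:
  assumes R: "is_reps val a c R" and ab: "a \<le> b" and bc: "b \<le> c"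
  shows "is_reps val b c {x\<in>R. x \<in> pp val b}"
  unfolding is_reps_def
proof (intro conjI ballI)
  show "finite {x\<in>R. x \<in> pp val b}" using is_repsD[OF R] by simp
  show "{x\<in>R. x \<in> pp val b} \<subseteq> pp val b" by auto
  fix x assume x: "x \<in> pp val b"
  have xa: "x \<in> pp val a" using pp_mono[OF ab x] .
  obtain r where r: "r \<in> R" "x - r \<in> pp val c" using is_repsD(3)[OF R xa] by blast
  have "r \<in> pp val b" using diff_mem_pp[OF x pp_mono[OF bc r(2)]] by simp
  then show "\<exists>!y\<in>{x\<in>R. x \<in> pp val b}. x - y \<in> pp val c"
    using r is_reps_unique[OF R xa] by blast
qed

lemma is_reps_add_unique:
  assumes R1: "is_reps val a b R1" and R2: "is_reps val b c R2" and bc: "b \<le> c"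
    and x: "x \<in> pp val a" and r: "r \<in> R1" "s \<in> R2" "r' \<in> R1" "s' \<in> R2"
    and e1: "x - (r + s) \<in> pp val c" and e2: "x - (r' + s') \<in> pp val c"
  shows "r = r' \<and> s = s'"
proof -
  have sb: "s \<in> pp val b" "s' \<in> pp val b" using is_repsD(2)[OF R2] r by auto
  have "x - r \<in> pp val b" using add_mem_pp[OF pp_mono[OF bc e1] sb(1)] by (simp add: algebra_simps)
  moreover have "x - r' \<in> pp val b"
    using add_mem_pp[OF pp_mono[OF bc e2] sb(2)] by (simp add: algebra_simps)
  ultimately have rr: "r = r'" using is_reps_unique[OF R1 x r(1) r(3)] by blast
  have "s - s' \<in> pp val c" using diff_mem_pp[OF e2 e1] rr by (simp add: algebra_simps)
  then have "s = s'" using is_reps_eq[OF R2 r(2) r(4)] by blast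
  with rr show ?thesis by simp
qed

lemma is_reps_add:
  assumes R1: "is_reps val a b R1" and R2: "is_reps val b c R2" and ab: "a \<le> b" and bc: "b \<le> c"
  shows "is_reps val a c ((\<lambda>(r, s). r + s) ` (R1 \<times> R2))"
    and "inj_on (\<lambda>(r, s). r + s) (R1 \<times> R2)"
proof -
  have mem: "r + s \<in> pp val a" if "r \<in> R1" "s \<in> R2" for r s
    using that is_repsD(2)[OF R1] is_repsD(2)[OF R2] pp_mono[OF ab] add_mem_pp by blast
  note key = is_reps_add_unique[OF R1 R2 bc]
  show "inj_on (\<lambda>(r, s). r + s) (R1 \<times> R2)"
    by (rule inj_onI) (use key mem in fastforce)
  show "is_reps val a c ((\<lambda>(r, s). r + s) ` (R1 \<times> R2))"
    unfolding is_reps_def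
  proof (intro conjI ballI)
    show "finite ((\<lambda>(r, s). r + s) ` (R1 \<times> R2))" using is_repsD(1)[OF R1] is_repsD(1)[OF R2] by simp
    show "(\<lambda>(r, s). r + s) ` (R1 \<times> R2) \<subseteq> pp val a" using mem by auto
    fix x assume x: "x \<in> pp val a"
    obtain r where r: "r \<in> R1" "x - r \<in> pp val b" using is_repsD(3)[OF R1 x] by blast
    obtain s where s: "s \<in> R2" "x - r - s \<in> pp val c" using is_repsD(3)[OF R2 r(2)] by blast
    show "\<exists>!y\<in>(\<lambda>(r, s). r + s) ` (R1 \<times> R2). x - y \<in> pp val c"
    proof (rule ex1I[of _ "r + s"])
      show "r + s \<in> (\<lambda>(r, s). r + s) ` (R1 \<times> R2) \<and> x - (r + s) \<in> pp val c"
        using r s by (force simp: algebra_simps)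
      fix y assume "y \<in> (\<lambda>(r, s). r + s) ` (R1 \<times> R2) \<and> x - y \<in> pp val c"
      then obtain r' s' where "r' \<in> R1" "s' \<in> R2" "y = r' + s'" "x - (r' + s') \<in> pp val c" by auto
      thus "y = r + s" using key[of x r' s' r s] x r s by (simp add: algebra_simps)
    qed
  qed
qed

lemma is_reps_exists: "a \<le> b \<Longrightarrow> \<exists>R. is_reps val a b R"
proof (induction b rule: int_ge_induct)
  case base
  have "is_reps val a a {0}" by (auto simp: is_reps_def)
  thus ?case by blast
next
  case (step b)
  then obtain R where R: "is_reps val a b R" by blast
  obtain R0 where R0: "is_reps val 0 1 R0" using residue_field_reps by blast
  obtain c where c: "c \<noteq> 0" "val c = b" using val_surj by blast
  have "is_reps val b (b + 1) ((*) c ` R0)" using is_reps_scale[OF R0 c(1)] c(2) by simp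
  from is_reps_add(1)[OF R this step(1)] show ?case by auto
qed

definition coset_const :: "int \<Rightarrow> int \<Rightarrow> ('a \<Rightarrow> 'b) \<Rightarrow> bool" where
  "coset_const a b g \<longleftrightarrow> (\<forall>x\<in>pp val a. \<forall>y\<in>pp val b. g (x + y) = g x)"

lemma coset_const_mono: "coset_const a b g \<Longrightarrow> b \<le> c \<Longrightarrow> coset_const a c g"
  unfolding coset_const_def using pp_mono by blast

lemma is_reps_bij:
  assumes R: "is_reps val a b R" and R': "is_reps val a b R'"
  obtains \<phi> where "bij_betw \<phi> R R'" "\<And>r. r \<in> R \<Longrightarrow> r - \<phi> r \<in> pp val b"
proof -
  define \<phi> where "\<phi> r = (THE r'. r' \<in> R' \<and> r - r' \<in> pp val b)" for r
  have \<phi>: "\<phi> r \<in> R' \<and> r - \<phi> r \<in> pp val b" if "r \<in> R" for r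
  proof -
    have "r \<in> pp val a" using is_repsD(2)[OF R] that by auto
    from is_repsD(3)[OF R' this] have "\<exists>!r'. r' \<in> R' \<and> r - r' \<in> pp val b" by blast
    thus ?thesis unfolding \<phi>_def by (rule theI')
  qed
  have "bij_betw \<phi> R R'"
  proof (rule bij_betw_imageI)
    show "inj_on \<phi> R"
    proof (rule inj_onI)
      fix r1 r2 assume h: "r1 \<in> R" "r2 \<in> R" "\<phi> r1 = \<phi> r2"
      have p: "\<phi> r1 \<in> pp val a" using \<phi>[OF h(1)] is_repsD(2)[OF R'] by auto
      have "\<phi> r1 - r1 \<in> pp val b" "\<phi> r1 - r2 \<in> pp val b"
        using \<phi>[OF h(1)] \<phi>[OF h(2)] h(3) diff_mem_pp_commute by metis+
      thus "r1 = r2" using is_reps_unique[OF R p h(1) h(2)] by blast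
    qed
    show "\<phi> ` R = R'"
    proof
      show "\<phi> ` R \<subseteq> R'" using \<phi> by auto
      show "R' \<subseteq> \<phi> ` R"
      proof
        fix r' assume r': "r' \<in> R'"
        have p: "r' \<in> pp val a" using r' is_repsD(2)[OF R'] by auto
        obtain r where r: "r \<in> R" "r' - r \<in> pp val b" using is_repsD(3)[OF R p] by blast
        have "r \<in> pp val a" using r is_repsD(2)[OF R] by auto
        hence "\<phi> r = r'"
          using is_reps_unique[OF R' _ _ r'] \<phi>[OF r(1)] diff_mem_pp_commute[OF r(2)] by blast
        thus "r' \<in> \<phi> ` R" using r by blast
      qed
    qed
  qed
  then show ?thesis using that \<phi> by blast
qed

lemma sum_is_reps_indep:
  fixes g :: "'a \<Rightarrow> 'b::comm_monoid_add"
  assumes R: "is_reps val a b R" and R': "is_reps val a b R'" and g: "coset_const a b g"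
  shows "sum g R = sum g R'"
proof -
  obtain \<phi> where bij: "bij_betw \<phi> R R'" and \<phi>: "\<And>r. r \<in> R \<Longrightarrow> r - \<phi> r \<in> pp val b"
    using is_reps_bij[OF R R'] by blast
  have "g r = g (\<phi> r)" if "r \<in> R" for r
  proof -
    have "\<phi> r \<in> pp val a" using bij_betwE[OF bij] that is_repsD(2)[OF R'] by auto
    hence "g (\<phi> r + (r - \<phi> r)) = g (\<phi> r)" using g \<phi>[OF that] unfolding coset_const_def by blast
    thus ?thesis by simp
  qed
  then have "sum g R = sum (g \<circ> \<phi>) R" by (auto intro: sum.cong)
  also have "\<dots> = sum g R'" using sum.reindex_bij_betw[OF bij, of g] by simp
  finally show ?thesis .
qed

lemma sum_is_reps_translate:
  fixes g :: "'a \<Rightarrow> 'b::comm_monoid_add"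
  assumes R: "is_reps val a b R" and t: "t \<in> pp val a" and g: "coset_const a b g"
  shows "(\<Sum>r\<in>R. g (t + r)) = sum g R"
proof -
  have "(\<Sum>r\<in>R. g (t + r)) = sum g ((+) t ` R)"
    by (subst sum.reindex) (auto simp: inj_on_def)
  also have "\<dots> = sum g R" using sum_is_reps_indep[OF is_reps_translate[OF R t] R g] .
  finally show ?thesis .
qed

lemma sum_is_reps_unit_scale:
  fixes g :: "'a \<Rightarrow> 'b::comm_monoid_add"
  assumes R: "is_reps val a b R" and c: "c \<in> units_o val" and g: "coset_const a b g"
  shows "(\<Sum>r\<in>R. g (c * r)) = sum g R"
proof -
  have "(\<Sum>r\<in>R. g (c * r)) = sum g ((*) c ` R)"
    using units_o_nonzero[OF c] by (subst sum.reindex) (auto simp: inj_on_def)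
  also have "\<dots> = sum g R" using sum_is_reps_indep[OF is_reps_unit_scale[OF R c] R g] .
  finally show ?thesis .
qed

lemma sum_is_reps_refine:
  fixes g :: "'a \<Rightarrow> 'b::comm_monoid_add"
  assumes R: "is_reps val a n R" and T: "is_reps val a 0 T" and S: "is_reps val 0 n S"
    and a: "a \<le> 0" and n: "0 \<le> n" and g: "coset_const a 0 g"
  shows "sum g R = (\<Sum>t\<in>T. \<Sum>s\<in>S. g t)"
proof -
  have "sum g R = sum g ((\<lambda>(r, s). r + s) ` (T \<times> S))"
    using sum_is_reps_indep[OF R is_reps_add(1)[OF T S a n] coset_const_mono[OF g n]] .
  also have "\<dots> = (\<Sum>(t, s)\<in>T \<times> S. g (t + s))"
    using sum.reindex[OF is_reps_add(2)[OF T S a n], of g] by (simp add: case_prod_unfold)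
  also have "\<dots> = (\<Sum>t\<in>T. \<Sum>s\<in>S. g (t + s))" by (rule sum.cartesian_product[symmetric])
  also have "\<dots> = (\<Sum>t\<in>T. \<Sum>s\<in>S. g t)"
    using is_repsD(2)[OF T] is_repsD(2)[OF S] g unfolding coset_const_def by (intro sum.cong refl) blast
  finally show ?thesis .
qed

end

section \<open>Smooth representations and the twisted Jacquet module\<close>

locale ZJ_setting = nonarch_valuation val + module sc
  for val :: "'a::field_char_0 \<Rightarrow> int" and sc :: "complex \<Rightarrow> 'v::ab_group_add \<Rightarrow> 'v" +
  fixes \<psi> :: "'a \<Rightarrow> complex" and \<pi> :: "'a ^ 4 ^ 4 \<Rightarrow> 'v \<Rightarrow> 'v"
  assumes conductor_o_char: "conductor_o_char val \<psi>" and smooth_rep: "smooth_rep val sc \<pi>"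
begin

abbreviation Z where "Z x \<equiv> \<pi> (zmat x)"
abbreviation D where "D c \<equiv> \<pi> (dmat c)"
abbreviation N where "N \<equiv> ZJ_kernel sc \<pi> \<psi>"

lemma psi_add: "\<psi> (x + y) = \<psi> x * \<psi> y"
  using conductor_o_char unfolding conductor_o_char_def by blast

lemma psi_nonzero: "\<psi> x \<noteq> 0"
  using conductor_o_char unfolding conductor_o_char_def by blast

lemma psi_pp_0: "x \<in> pp val 0 \<Longrightarrow> \<psi> x = 1"
  using conductor_o_char unfolding conductor_o_char_def by blast

lemma psi_nontrivial: "\<exists>t\<in>pp val (-1). \<psi> t \<noteq> 1"
  using conductor_o_char unfolding conductor_o_char_def by blast

lemma psi_minus: "\<psi> (- x) * \<psi> x = 1"
  using psi_add[of "-x" x] psi_pp_0[of 0] by simp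

lemma psi_diff: "\<psi> (x - y) = \<psi> x * \<psi> (- y)"
  using psi_add[of x "-y"] by simp

lemma psi_add_pp_0: "e \<in> pp val 0 \<Longrightarrow> \<psi> (x + e) = \<psi> x"
  by (simp add: psi_add psi_pp_0)

lemma pi_hom: "g \<in> GSp4 \<Longrightarrow> module_hom sc sc (\<pi> g)"
  using smooth_rep unfolding smooth_rep_def by (simp add: module_hom_iff_linear)

lemma pi_mult: "g \<in> GSp4 \<Longrightarrow> h \<in> GSp4 \<Longrightarrow> \<pi> g (\<pi> h v) = \<pi> (g ** h) v"
  using smooth_rep unfolding smooth_rep_def by simp

lemma pi_1: "\<pi> (mat 1) v = v"
  using smooth_rep unfolding smooth_rep_def by simp

lemma Z_add: "Z x (Z y v) = Z (x + y) v"
  by (simp add: pi_mult zmat_in_GSp4 zmat_mult)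

lemma D_mult: "c \<noteq> 0 \<Longrightarrow> d \<noteq> 0 \<Longrightarrow> D c (D d v) = D (c * d) v"
  by (simp add: pi_mult dmat_in_GSp4 dmat_mult)

lemma D_1: "D 1 v = v"
  by (simp add: dmat_1 pi_1)

lemma D_Z_commute: "c \<noteq> 0 \<Longrightarrow> D c (Z x v) = Z (x / c) (D c v)"
  using zmat_dmat_commute[of "x / c" c]
  by (simp add: pi_mult dmat_in_GSp4 zmat_in_GSp4)

lemma Z_linear:
  "Z x (a + b) = Z x a + Z x b" "Z x (a - b) = Z x a - Z x b" "Z x (sc r a) = sc r (Z x a)"
  "Z x 0 = 0" "Z x (sum f A) = (\<Sum>i\<in>A. Z x (f i))"
  using pi_hom[OF zmat_in_GSp4, of x]
  by (simp_all add: module_hom.add module_hom.diff module_hom.scale module_hom.zero module_hom.sum)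

lemma D_linear:
  assumes "c \<noteq> 0"
  shows "D c (a + b) = D c a + D c b" "D c (a - b) = D c a - D c b" "D c (sc r a) = sc r (D c a)"
    "D c 0 = 0" "D c (sum f A) = (\<Sum>i\<in>A. D c (f i))"
  using pi_hom[OF dmat_in_GSp4[OF assms]]
  by (simp_all add: module_hom.add module_hom.diff module_hom.scale module_hom.zero module_hom.sum)

lemma smooth_Z_D: "\<exists>n\<ge>1. (\<forall>y\<in>pp val n. Z y v = v) \<and> (\<forall>e. e - 1 \<in> pp val n \<longrightarrow> D e v = v)"
proof -
  obtain n where n: "n \<ge> 1" "\<forall>g\<in>GSp4. (\<forall>i j. (g - mat 1) $ i $ j \<in> pp val n) \<longrightarrow> \<pi> g v = v"
    using smooth_rep unfolding smooth_rep_def by blast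
  have "Z y v = v" if "y \<in> pp val n" for y
  proof -
    have "\<forall>i j. (zmat y - mat 1) $ i $ j \<in> pp val n"
      unfolding zmat_minus_1_nth using that by simp
    then show ?thesis using n(2) zmat_in_GSp4 by blast
  qed
  moreover have "D e v = v" if e: "e - 1 \<in> pp val n" for e
  proof -
    have "e \<in> units_o val"
      using one_plus_mem_units_o[OF pp_mono[OF n(1) e]] by simp
    moreover have "\<forall>i j. (dmat e - mat 1) $ i $ j \<in> pp val n"
      unfolding dmat_minus_1_nth using e by simp
    ultimately show ?thesis using n(2) dmat_in_GSp4[OF units_o_nonzero] by blast
  qed
  ultimately show ?thesis using n(1) by blast
qed

lemma scale_card_eq_0: "sc (of_nat n) u = 0 \<Longrightarrow> n \<noteq> 0 \<Longrightarrow> u = 0"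
  using scale_scale[of "1 / of_nat n" "of_nat n" u] by simp

lemma coset_const_twisted_Z:
  assumes w: "\<And>e. e \<in> pp val n \<Longrightarrow> Z e w = w"
    and l: "\<And>x e. x \<in> pp val a \<Longrightarrow> e \<in> pp val n \<Longrightarrow> l (x + e) - l x \<in> pp val 0"
  shows "coset_const a n (\<lambda>x. sc (\<psi> (l x)) (F (Z x w)))"
  unfolding coset_const_def
proof (intro ballI)
  fix x e assume x: "x \<in> pp val a" and e: "e \<in> pp val n"
  have "Z (x + e) w = Z x w" using w[OF e] Z_add[of x e w] by simp
  moreover have "\<psi> (l (x + e)) = \<psi> (l x)"
    using psi_add_pp_0[OF l[OF x e], of "l x"] by simp
  ultimately show "sc (\<psi> (l (x + e))) (F (Z (x + e) w)) = sc (\<psi> (l x)) (F (Z x w))" by simp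
qed

lemma coset_const_Z:
  "(\<And>e. e \<in> pp val n \<Longrightarrow> Z e w = w) \<Longrightarrow> coset_const a n (\<lambda>x. Z x w)"
  using coset_const_twisted_Z[of n w a "\<lambda>_. 0" id] by (simp add: psi_pp_0)

lemma character_sum:
  assumes A: "is_reps val j m A" and y: "y \<in> pp val (-m)"
  shows "(\<Sum>a\<in>A. \<psi> (a * y)) = (if y \<in> pp val (-j) then of_nat (card A) else 0)"
proof (cases "y \<in> pp val (-j)")
  case True
  have "\<psi> (a * y) = 1" if "a \<in> A" for a
    using mult_mem_pp[of a j y "-j"] is_repsD(2)[OF A] that True psi_pp_0 by auto
  thus ?thesis using True by simp
next
  case False
  then have yv: "y \<noteq> 0" "val y < -j" using not_mem_ppD by auto
  obtain t where t: "t \<in> pp val (-1)" "\<psi> t \<noteq> 1" using psi_nontrivial by blast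
  have "t / y \<in> pp val (-1 - val y)" using divide_mem_pp[OF t(1) yv(1)] .
  hence a0: "t / y \<in> pp val j" using yv(2) pp_mono[of j "-1 - val y"] by simp
  have "coset_const j m (\<lambda>a. \<psi> (a * y))"
    unfolding coset_const_def
    using mult_mem_pp[OF _ y, of _ m] by (simp add: distrib_right psi_add_pp_0)
  then have "(\<Sum>a\<in>A. \<psi> ((t / y + a) * y)) = (\<Sum>a\<in>A. \<psi> (a * y))"
    using sum_is_reps_translate[OF A a0] by blast
  moreover have "(\<Sum>a\<in>A. \<psi> ((t / y + a) * y)) = \<psi> t * (\<Sum>a\<in>A. \<psi> (a * y))"
    using yv(1) by (simp add: distrib_right psi_add sum_distrib_left)
  ultimately have "(\<psi> t - 1) * (\<Sum>a\<in>A. \<psi> (a * y)) = 0" by (simp add: algebra_simps)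
  thus ?thesis using False t(2) by simp
qed

lemma haar_int_eq_sum:
  assumes f: "coset_const (-1) 0 f" and T: "is_reps val (-1) 0 T"
  shows "haar_int val sc (-1) f = sum f T"
proof -
  have avg: "(\<Sum>r\<in>R. sc (1 / of_nat (card S)) (f r)) = sum f T"
    if n: "0 \<le> n" and R: "is_reps val (-1) n R" and S: "is_reps val 0 n S" for n R S
  proof -
    have "sum f R = sc (of_nat (card S)) (sum f T)"
      using sum_is_reps_refine[OF R T S _ n f] by (simp add: sum_constant_scale scale_sum_right)
    then show ?thesis
      using card_is_reps_nonzero[OF S] by (simp add: scale_sum_right[symmetric])
  qed
  show ?thesis
    unfolding haar_int_def
  proof (rule the_equality)
    show "\<exists>n. max 0 (- 1) \<le> n \<and> (\<forall>x\<in>pp val (- 1). \<forall>y\<in>pp val n. f (x + y) = f x) \<and>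
        (\<forall>R S. is_reps val (- 1) n R \<longrightarrow> is_reps val 0 n S \<longrightarrow>
           sum f T = (\<Sum>r\<in>R. sc (1 / of_nat (card S)) (f r)))"
      using f avg[of 0] unfolding coset_const_def by (intro exI[of _ 0]) auto
  next
    fix I assume "\<exists>n. max 0 (- 1) \<le> n \<and> (\<forall>x\<in>pp val (- 1). \<forall>y\<in>pp val n. f (x + y) = f x) \<and>
        (\<forall>R S. is_reps val (- 1) n R \<longrightarrow> is_reps val 0 n S \<longrightarrow>
           I = (\<Sum>r\<in>R. sc (1 / of_nat (card S)) (f r)))"
    then obtain n where n: "0 \<le> n" and I: "\<And>R S. is_reps val (- 1) n R \<Longrightarrow> is_reps val 0 n S \<Longrightarrow>
        I = (\<Sum>r\<in>R. sc (1 / of_nat (card S)) (f r))"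
      by auto
    obtain R where R: "is_reps val (-1) n R" using is_reps_exists[of "-1" n] n by auto
    obtain S where S: "is_reps val 0 n S" using is_reps_exists[of 0 n] n by auto
    show "I = sum f T" using I[OF R S] avg[OF n R S] by simp
  qed
qed

lemma haar_int_Z_eq_sum:
  "(\<And>y. y \<in> pp val 0 \<Longrightarrow> Z y v = v) \<Longrightarrow> is_reps val (-1) 0 T \<Longrightarrow>
    haar_int val sc (-1) (\<lambda>x. Z x v) = (\<Sum>t\<in>T. Z t v)"
  using haar_int_eq_sum coset_const_Z by blast

lemma ZJ_kernel_span: "N = span {Z x v - sc (\<psi> x) v | x v. True}"
  by (simp add: ZJ_kernel_def)

lemma ZJ_kernel_generator: "Z x v - sc (\<psi> x) v \<in> N"
  unfolding ZJ_kernel_span by (rule span_base) blast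

lemma ZJ_proj_eq_iff: "ZJ_proj sc \<pi> \<psi> v = ZJ_proj sc \<pi> \<psi> v' \<longleftrightarrow> v - v' \<in> N"
proof
  assume h: "ZJ_proj sc \<pi> \<psi> v = ZJ_proj sc \<pi> \<psi> v'"
  have "v \<in> ZJ_proj sc \<pi> \<psi> v" unfolding ZJ_proj_def ZJ_kernel_span using span_zero by force
  then obtain u where "u \<in> N" "v = v' + u" using h unfolding ZJ_proj_def by auto
  thus "v - v' \<in> N" by simp
next
  assume h: "v - v' \<in> N"
  have "v + u = v' + ((v - v') + u)" "v' + u = v + (u - (v - v'))" for u
    by simp_all
  then show "ZJ_proj sc \<pi> \<psi> v = ZJ_proj sc \<pi> \<psi> v'"
    using h unfolding ZJ_proj_def ZJ_kernel_span by (blast intro: span_add span_diff)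
qed

end

section \<open>Uniqueness\<close>

context ZJ_setting
begin

text \<open>Membership in the kernel of p is detected by twisted averages over large compact
  subgroups; only the easy direction, for generators and hence for their span, is needed.\<close>

definition twisted_sums_vanish :: "'v \<Rightarrow> bool" where
  "twisted_sums_vanish u \<longleftrightarrow> (\<exists>m0 n0. 0 \<le> n0 \<and> (\<forall>m n X. m0 \<le> m \<longrightarrow> n0 \<le> n \<longrightarrow>
      is_reps val (-m) n X \<longrightarrow> (\<Sum>x\<in>X. sc (\<psi> (-x)) (Z x u)) = 0))"

lemma twisted_sums_vanish_generator: "twisted_sums_vanish (Z y v - sc (\<psi> y) v)"
proof -
  obtain n1 where n1: "1 \<le> n1" "\<forall>e\<in>pp val n1. Z e v = v"
    using smooth_Z_D[of v] by blast
  define m0 where "m0 = (if y = 0 then 0 else - val y)"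
  have "(\<Sum>x\<in>X. sc (\<psi> (-x)) (Z x (Z y v - sc (\<psi> y) v))) = 0"
    if m: "m0 \<le> m" and n: "n1 \<le> n" and X: "is_reps val (-m) n X" for m n X
  proof -
    have y: "y \<in> pp val (-m)" using m by (cases "y = 0") (auto simp: m0_def pp_def)
    define k where "k x = sc (\<psi> (-(x - y))) (id (Z x v))" for x
    have "coset_const (-m) n k" unfolding k_def
    proof (rule coset_const_twisted_Z)
      show "Z e v = v" if "e \<in> pp val n" for e using n1(2) pp_mono[OF n that] by blast
      fix x e assume "e \<in> pp val n"
      hence "- e \<in> pp val 0" using pp_mono[of 0 n] n n1 by simp
      thus "- (x + e - y) - - (x - y) \<in> pp val 0" by (simp add: algebra_simps)
    qed
    then have "(\<Sum>x\<in>X. k (y + x)) = sum k X" using sum_is_reps_translate[OF X y] by blast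
    moreover have "k (y + x) = sc (\<psi> (-x)) (Z x (Z y v))" for x
      by (simp add: k_def Z_add add.commute)
    moreover have "k x = sc (\<psi> (-x)) (sc (\<psi> y) (Z x v))" for x
      by (simp add: k_def psi_diff mult.commute)
    ultimately have "(\<Sum>x\<in>X. sc (\<psi> (-x)) (Z x (Z y v))) = (\<Sum>x\<in>X. sc (\<psi> (-x)) (sc (\<psi> y) (Z x v)))"
      by simp
    then show ?thesis by (simp add: Z_linear scale_right_diff_distrib sum_subtractf)
  qed
  thus ?thesis unfolding twisted_sums_vanish_def using n1(1) by (intro exI[of _ m0] exI[of _ n1]) auto
qed

lemma twisted_sums_vanish_subspace: "subspace (Collect twisted_sums_vanish)"
proof (rule subspaceI)
  show "0 \<in> Collect twisted_sums_vanish"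
    unfolding twisted_sums_vanish_def by (auto simp: Z_linear intro!: exI[of _ 0])
next
  fix a b assume "a \<in> Collect twisted_sums_vanish" "b \<in> Collect twisted_sums_vanish"
  then obtain ma na mb nb where
    a: "0 \<le> na" "\<forall>m n X. ma \<le> m \<longrightarrow> na \<le> n \<longrightarrow> is_reps val (-m) n X \<longrightarrow>
      (\<Sum>x\<in>X. sc (\<psi> (-x)) (Z x a)) = 0" and
    b: "0 \<le> nb" "\<forall>m n X. mb \<le> m \<longrightarrow> nb \<le> n \<longrightarrow> is_reps val (-m) n X \<longrightarrow>
      (\<Sum>x\<in>X. sc (\<psi> (-x)) (Z x b)) = 0"
    unfolding twisted_sums_vanish_def by auto
  show "a + b \<in> Collect twisted_sums_vanish"
    unfolding twisted_sums_vanish_def mem_Collect_eq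
    using a b by (intro exI[of _ "max ma mb"] exI[of _ "max na nb"])
      (auto simp: Z_linear scale_right_distrib sum.distrib)
next
  fix c a assume "a \<in> Collect twisted_sums_vanish"
  then obtain ma na where a: "0 \<le> na" "\<forall>m n X. ma \<le> m \<longrightarrow> na \<le> n \<longrightarrow> is_reps val (-m) n X \<longrightarrow>
      (\<Sum>x\<in>X. sc (\<psi> (-x)) (Z x a)) = 0"
    unfolding twisted_sums_vanish_def by auto
  have "(\<Sum>x\<in>X. sc (\<psi> (-x)) (Z x (sc c a))) = sc c (\<Sum>x\<in>X. sc (\<psi> (-x)) (Z x a))" for X
    by (simp add: Z_linear scale_sum_right mult.commute)
  then show "sc c a \<in> Collect twisted_sums_vanish"
    unfolding twisted_sums_vanish_def mem_Collect_eq
    using a by (intro exI[of _ ma] exI[of _ na]) auto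
qed

lemma twisted_sums_vanish_ZJ_kernel: "u \<in> N \<Longrightarrow> twisted_sums_vanish u"
  using span_induct[of u _ twisted_sums_vanish] twisted_sums_vanish_subspace
    twisted_sums_vanish_generator
  unfolding ZJ_kernel_span by blast

lemma twisted_sum_coarse_vanish:
  assumes u: "u \<in> N" and Zu: "\<And>y. y \<in> pp val 0 \<Longrightarrow> Z y u = u"
  obtains m where "1 \<le> m"
    "\<And>T. is_reps val (-m) 0 T \<Longrightarrow> (\<Sum>x\<in>T. sc (\<psi> (-x)) (Z x u)) = 0"
proof -
  obtain m0 n0 where n0: "0 \<le> n0" and vanish: "\<And>m n X. m0 \<le> m \<Longrightarrow> n0 \<le> n \<Longrightarrow>
      is_reps val (-m) n X \<Longrightarrow> (\<Sum>x\<in>X. sc (\<psi> (-x)) (Z x u)) = 0"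
    using twisted_sums_vanish_ZJ_kernel[OF u] unfolding twisted_sums_vanish_def by blast
  define m where "m = max m0 1"
  have m: "1 \<le> m" "m0 \<le> m" by (auto simp: m_def)
  obtain X where X: "is_reps val (-m) n0 X" using is_reps_exists[of "-m" n0] m n0 by auto
  obtain S where S: "is_reps val 0 n0 S" using is_reps_exists[of 0 n0] n0 by auto
  have "(\<Sum>x\<in>T. sc (\<psi> (-x)) (Z x u)) = 0" if T: "is_reps val (-m) 0 T" for T
  proof -
    define g where "g x = sc (\<psi> (-x)) (id (Z x u))" for x
    have g: "coset_const (-m) 0 g" unfolding g_def
      by (rule coset_const_twisted_Z) (use Zu in auto)
    have "sum g X = sc (of_nat (card S)) (sum g T)"
      using sum_is_reps_refine[OF X T S _ n0 g] m(1) by (simp add: sum_constant_scale scale_sum_right)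
    moreover have "sum g X = 0" using vanish[OF m(2) order.refl X] by (simp add: g_def)
    ultimately show ?thesis using scale_card_eq_0 card_is_reps_nonzero[OF S] by (simp add: g_def)
  qed
  then show ?thesis using that m(1) by blast
qed

lemma D_twisted_sum:
  assumes c: "c \<in> units_o val" and Du: "D c u = u" and Zu: "\<And>y. y \<in> pp val 0 \<Longrightarrow> Z y u = u"
    and T: "is_reps val (-m) 0 T"
  shows "D c (\<Sum>x\<in>T. sc (\<psi> (-x)) (Z x u)) = (\<Sum>x\<in>T. sc (\<psi> (- (c * x))) (Z x u))"
proof -
  have c0: "c \<noteq> 0" using units_o_nonzero[OF c] .
  define k where "k y = sc (\<psi> (- (c * y))) (id (Z y u))" for y
  have k: "coset_const (-m) 0 k" unfolding k_def
  proof (rule coset_const_twisted_Z)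
    fix x e assume "e \<in> pp val 0"
    then have "c * e \<in> pp val 0" using units_o_mult_mem_pp_iff[OF c] by blast
    then show "- (c * (x + e)) - - (c * x) \<in> pp val 0" by (simp add: algebra_simps)
  qed (use Zu in simp)
  have "D c (sc (\<psi> (-x)) (Z x u)) = k (inverse c * x)" for x
    using c0 Du by (simp add: k_def D_linear D_Z_commute field_simps)
  then have "D c (\<Sum>x\<in>T. sc (\<psi> (-x)) (Z x u)) = (\<Sum>x\<in>T. k (inverse c * x))"
    by (simp add: D_linear[OF c0])
  also have "\<dots> = sum k T" using sum_is_reps_unit_scale[OF T units_o_inverse[OF c] k] .
  finally show ?thesis by (simp add: k_def)
qed

lemma ramanujan_sum:
  assumes A: "is_reps val 0 m A" and m: "1 \<le> m" and x: "x \<in> pp val (-m)"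
  shows "(\<Sum>c\<in>{c\<in>A. c \<notin> pp val 1}. \<psi> (c * x)) =
    (if x \<in> pp val 0 then of_nat (card A) else 0) -
    (if x \<in> pp val (-1) then of_nat (card {c\<in>A. c \<in> pp val 1}) else 0)"
proof -
  have A1: "is_reps val 1 m {c\<in>A. c \<in> pp val 1}" using is_reps_restrict[OF A _ m] by simp
  have "{c\<in>A. c \<notin> pp val 1} = A - {c\<in>A. c \<in> pp val 1}" by blast
  then have "(\<Sum>c\<in>{c\<in>A. c \<notin> pp val 1}. \<psi> (c * x)) =
      (\<Sum>c\<in>A. \<psi> (c * x)) - (\<Sum>c\<in>{c\<in>A. c \<in> pp val 1}. \<psi> (c * x))"
    using sum_diff[OF is_repsD(1)[OF A], of _ "\<lambda>c. \<psi> (c * x)"] by auto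
  then show ?thesis using character_sum[OF A x] character_sum[OF A1 x] by simp
qed

lemma sum_scale_indicator:
  assumes "finite T"
  shows "(\<Sum>x\<in>T. sc (if P x then k else 0) (f x)) = sc k (\<Sum>x\<in>{x\<in>T. P x}. f x)"
proof -
  have "(\<Sum>x\<in>T. sc (if P x then k else 0) (f x)) = (\<Sum>x\<in>T. sc k (if P x then f x else 0))"
    by (rule sum.cong) auto
  then show ?thesis by (simp add: sum.inter_filter[OF assms] scale_sum_right)
qed

lemma sum_Z_is_reps_pp_0:
  assumes T: "is_reps val (-m) 0 T" and m: "0 \<le> m" and Zu: "\<And>y. y \<in> pp val 0 \<Longrightarrow> Z y u = u"
  shows "(\<Sum>x\<in>{x\<in>T. x \<in> pp val 0}. Z x u) = u"
proof -
  obtain x0 where "{x\<in>T. x \<in> pp val 0} = {x0}"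
    using is_reps_singleton[OF is_reps_restrict[OF T _ order.refl]] m by auto
  then show ?thesis using Zu by auto
qed

lemma sum_Z_is_reps_pp_minus_1:
  assumes T: "is_reps val (-m) 0 T" and m: "1 \<le> m" and T1: "is_reps val (-1) 0 T1"
    and Zu: "\<And>y. y \<in> pp val 0 \<Longrightarrow> Z y u = u"
  shows "(\<Sum>x\<in>{x\<in>T. x \<in> pp val (-1)}. Z x u) = (\<Sum>t\<in>T1. Z t u)"
proof -
  have "is_reps val (-1) 0 {x\<in>T. x \<in> pp val (-1)}" using is_reps_restrict[OF T] m by simp
  then show ?thesis using sum_is_reps_indep[OF _ T1 coset_const_Z] Zu by blast
qed

lemma ZJ_kernel_invariant_eq_0:
  assumes u: "u \<in> N" and Zu: "\<And>y. y \<in> pp val 0 \<Longrightarrow> Z y u = u"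
    and Du: "\<And>c. c \<in> units_o val \<Longrightarrow> D c u = u"
    and T1: "is_reps val (-1) 0 T1" and integral: "(\<Sum>t\<in>T1. Z t u) = 0"
  shows "u = 0"
proof -
  obtain m where m: "1 \<le> m"
    and vanish: "\<And>T. is_reps val (-m) 0 T \<Longrightarrow> (\<Sum>x\<in>T. sc (\<psi> (-x)) (Z x u)) = 0"
    using twisted_sum_coarse_vanish[OF u Zu] by blast
  obtain T where T: "is_reps val (-m) 0 T" using is_reps_exists[of "-m" 0] m by auto
  obtain A where A: "is_reps val 0 m A" using is_reps_exists[of 0 m] m by auto
  define U where "U = {c\<in>A. c \<notin> pp val 1}"
  define A1 where "A1 = {c\<in>A. c \<in> pp val 1}"
  have unit: "c \<in> units_o val" if "c \<in> U" for c
    using that is_repsD(2)[OF A] units_o_iff by (auto simp: U_def)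
  have integral_T: "(\<Sum>x\<in>{x\<in>T. x \<in> pp val (-1)}. Z x u) = 0"
    using sum_Z_is_reps_pp_minus_1[OF T m T1 Zu] integral by simp
  have "0 = (\<Sum>c\<in>U. D c (\<Sum>x\<in>T. sc (\<psi> (-x)) (Z x u)))"
    using vanish[OF T] unit by (simp add: D_linear(4)[OF units_o_nonzero])
  also have "\<dots> = (\<Sum>c\<in>U. \<Sum>x\<in>T. sc (\<psi> (c * (-x))) (Z x u))"
    using D_twisted_sum[OF unit Du[OF unit] Zu T] by simp
  also have "\<dots> = (\<Sum>x\<in>T. sc (\<Sum>c\<in>U. \<psi> (c * (-x))) (Z x u))"
    by (subst sum.swap) (simp add: scale_sum_left)
  also have "\<dots> = (\<Sum>x\<in>T. sc (if x \<in> pp val 0 then of_nat (card A) else 0) (Z x u)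
                         - sc (if x \<in> pp val (-1) then of_nat (card A1) else 0) (Z x u))"
  proof (intro sum.cong refl)
    fix x assume "x \<in> T"
    then have "- x \<in> pp val (-m)" using is_repsD(2)[OF T] by auto
    from ramanujan_sum[OF A m this]
    show "sc (\<Sum>c\<in>U. \<psi> (c * (-x))) (Z x u) =
        sc (if x \<in> pp val 0 then of_nat (card A) else 0) (Z x u)
        - sc (if x \<in> pp val (-1) then of_nat (card A1) else 0) (Z x u)"
      by (simp add: U_def A1_def flip: scale_left_diff_distrib)
  qed
  also have "\<dots> = sc (of_nat (card A)) u"
    using sum_scale_indicator[OF is_repsD(1)[OF T]] sum_Z_is_reps_pp_0[OF T _ Zu] m integral_T
    by (simp add: sum_subtractf)
  finally show ?thesis using scale_card_eq_0 card_is_reps_nonzero[OF A] by metis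
qed

end

section \<open>Existence\<close>

locale ZJ_lift = ZJ_setting val sc \<psi> \<pi>
  for val :: "'a::field_char_0 \<Rightarrow> int" and sc :: "complex \<Rightarrow> 'v::ab_group_add \<Rightarrow> 'v"
    and \<psi> and \<pi> +
  fixes v0 :: 'v and K :: int and X S :: "'a set"
  assumes K: "1 \<le> K" and Z_fixes_v0: "\<forall>y\<in>pp val K. Z y v0 = v0"
    and D_fixes_v0: "\<forall>e. e - 1 \<in> pp val K \<longrightarrow> D e v0 = v0"
    and X: "is_reps val (-K) K X" and S: "is_reps val 0 K S"
begin

text \<open>eigen_avg c is the vector V(c): averaging psi(-x) pi(z(x)) over x in p^-K / p^K
  projects onto the psi-eigenspace of z(p^-K), and d(c) moves this to the psi(c *)-eigenspace.\<close>

definition eigen_avg :: "'a \<Rightarrow> 'v" where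
  "eigen_avg c = sc (1 / of_nat (card X)) (\<Sum>x\<in>X. sc (\<psi> (-x)) (D c (Z x v0)))"

definition unit_term :: "'a \<Rightarrow> 'v" where
  "unit_term c = (if c \<in> pp val 1 then 0 else eigen_avg c)"

definition lift :: 'v where
  "lift = sum unit_term S"

lemma coset_const_twisted_Z_v0:
  assumes "\<And>x e. e \<in> pp val K \<Longrightarrow> l (x + e) - l x \<in> pp val 0"
  shows "coset_const (-K) K (\<lambda>x. sc (\<psi> (l x)) (D c (Z x v0)))"
  using coset_const_twisted_Z[of K v0 "-K" l "D c"] Z_fixes_v0 assms by blast

lemma Z_eigen_avg:
  assumes c: "c \<in> units_o val" and y: "y \<in> pp val (-K)"
  shows "Z y (eigen_avg c) = sc (\<psi> (c * y)) (eigen_avg c)"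
proof -
  have c0: "c \<noteq> 0" using units_o_nonzero[OF c] .
  have cy: "c * y \<in> pp val (-K)" using mult_mem_pp[OF units_o_mem_pp_0[OF c] y] by simp
  define k where "k x = sc (\<psi> (-(x - c * y))) (D c (Z x v0))" for x
  have k: "coset_const (-K) K k" unfolding k_def
  proof (rule coset_const_twisted_Z_v0)
    fix x e assume "e \<in> pp val K"
    then show "- (x + e - c * y) - - (x - c * y) \<in> pp val 0"
      using pp_mono[of 0 K] K by (simp add: algebra_simps)
  qed
  have "Z y (D c (Z x v0)) = D c (Z (c * y + x) v0)" for x
    using D_Z_commute[OF c0, of "c * y" "Z x v0"] c0 by (simp add: Z_add)
  then have "Z y (eigen_avg c) = sc (1 / of_nat (card X)) (\<Sum>x\<in>X. k (c * y + x))"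
    by (simp add: eigen_avg_def k_def Z_linear)
  also have "(\<Sum>x\<in>X. k (c * y + x)) = sum k X" using sum_is_reps_translate[OF X cy k] .
  also have "sum k X = sc (\<psi> (c * y)) (\<Sum>x\<in>X. sc (\<psi> (-x)) (D c (Z x v0)))"
    by (simp add: k_def scale_sum_right psi_diff mult.commute)
  finally show ?thesis by (simp add: eigen_avg_def mult.commute)
qed

lemma eigen_avg_translate:
  assumes c: "c \<in> units_o val" and e: "e \<in> pp val K"
  shows "eigen_avg (c + e) = eigen_avg c"
proof -
  have c0: "c \<noteq> 0" using units_o_nonzero[OF c] .
  define e' where "e' = 1 + e / c"
  have ec: "e / c \<in> pp val K" using divide_mem_pp[OF e c0] units_o_val[OF c] by simp
  have e'u: "e' \<in> units_o val"
    unfolding e'_def using one_plus_mem_units_o[OF pp_mono[OF K ec]] .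
  have e'0: "e' \<noteq> 0" using units_o_nonzero[OF e'u] .
  have e'e': "e' * (inverse e' * x) = x" for x
    using e'0 by (metis mult.assoc mult.left_neutral right_inverse)
  define k where "k y = sc (\<psi> (- (e' * y))) (D c (Z y v0))" for y
  have "D (c + e) (Z x v0) = D c (Z (inverse e' * x) v0)" for x
  proof -
    have "c + e = c * e'" using c0 by (simp add: e'_def field_simps)
    moreover have "D e' v0 = v0" using D_fixes_v0 ec by (simp add: e'_def)
    moreover have "x / e' = inverse e' * x" by (simp add: divide_inverse mult.commute)
    ultimately show ?thesis using D_mult[OF c0 e'0] D_Z_commute[OF e'0] by metis
  qed
  then have "eigen_avg (c + e) = sc (1 / of_nat (card X)) (\<Sum>x\<in>X. k (inverse e' * x))"
    unfolding eigen_avg_def k_def e'e' by simp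
  also have "(\<Sum>x\<in>X. k (inverse e' * x)) = sum k X"
  proof (rule sum_is_reps_unit_scale[OF X units_o_inverse[OF e'u]])
    show "coset_const (-K) K k" unfolding k_def
    proof (rule coset_const_twisted_Z_v0)
      fix x e2 assume "e2 \<in> pp val K"
      then have "e' * e2 \<in> pp val 0"
        using units_o_mult_mem_pp_iff[OF e'u] pp_mono[of 0 K] K by simp
      then show "- (e' * (x + e2)) - - (e' * x) \<in> pp val 0" by (simp add: algebra_simps)
    qed
  qed
  also have "sum k X = (\<Sum>x\<in>X. sc (\<psi> (-x)) (D c (Z x v0)))"
  proof (rule sum.cong[OF refl])
    fix x assume "x \<in> X"
    then have "(e / c) * x \<in> pp val 0" using mult_mem_pp[OF ec] is_repsD(2)[OF X] by fastforce
    then have "\<psi> (- (e' * x)) = \<psi> (-x)"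
      using psi_add_pp_0[of "- ((e / c) * x)" "-x"] by (simp add: e'_def algebra_simps)
    then show "k x = sc (\<psi> (-x)) (D c (Z x v0))" by (simp add: k_def)
  qed
  finally show ?thesis by (simp add: eigen_avg_def)
qed

lemma eigen_avg_1_congruent: "eigen_avg 1 - v0 \<in> N"
proof -
  have "v0 = sc (1 / of_nat (card X)) (\<Sum>x\<in>X. v0)"
    using card_is_reps_nonzero[OF X] by (simp add: sum_constant_scale)
  then have "eigen_avg 1 - v0 = sc (1 / of_nat (card X)) (\<Sum>x\<in>X. sc (\<psi> (-x)) (Z x v0) - v0)"
    by (simp add: eigen_avg_def D_1 sum_subtractf scale_right_diff_distrib)
  also have "\<dots> = sc (1 / of_nat (card X)) (\<Sum>x\<in>X. sc (\<psi> (-x)) (Z x v0 - sc (\<psi> x) v0))"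
    by (simp add: scale_right_diff_distrib psi_minus)
  also have "\<dots> \<in> N"
    unfolding ZJ_kernel_span
    by (intro span_scale span_sum) (rule ZJ_kernel_generator[unfolded ZJ_kernel_span])
  finally show ?thesis .
qed

text \<open>For c not in 1 + p^K pick y with psi(c y) \<noteq> psi(y); then the kernel generator
  z(y) V(c) - psi(y) V(c) is a nonzero multiple of V(c).\<close>

lemma eigen_avg_in_ZJ_kernel:
  assumes c: "c \<in> units_o val" and c1: "c - 1 \<notin> pp val K"
  shows "eigen_avg c \<in> N"
proof -
  define d where "d = c - 1"
  have dv: "d \<noteq> 0" "val d < K" using not_mem_ppD[OF c1] by (auto simp: d_def)
  obtain t where t: "t \<in> pp val (-1)" "\<psi> t \<noteq> 1" using psi_nontrivial by blast
  define y where "y = t / d"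
  have "y \<in> pp val (-1 - val d)" using divide_mem_pp[OF t(1) dv(1)] by (simp add: y_def)
  then have y: "y \<in> pp val (-K)" using pp_mono[of "-K" "-1 - val d"] dv by simp
  have cy: "c * y = y + t" using dv by (simp add: y_def d_def field_simps)
  define a where "a = \<psi> y * (\<psi> t - 1)"
  have "sc a (eigen_avg c) \<in> N"
    using ZJ_kernel_generator[of y "eigen_avg c"] Z_eigen_avg[OF c y]
    by (simp add: a_def cy psi_add algebra_simps scale_left_diff_distrib)
  then have "sc (inverse a) (sc a (eigen_avg c)) \<in> N"
    unfolding ZJ_kernel_span by (rule span_scale)
  moreover have "a \<noteq> 0" using psi_nonzero[of y] t(2) by (simp add: a_def)
  ultimately show ?thesis by simp
qed

lemma coset_const_unit_term: "coset_const 0 K unit_term"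
  unfolding coset_const_def
proof (intro ballI)
  fix c e assume c: "c \<in> pp val 0" and e: "e \<in> pp val K"
  have e1: "e \<in> pp val 1" using pp_mono[OF K e] .
  have iff: "c + e \<in> pp val 1 \<longleftrightarrow> c \<in> pp val 1"
    using add_mem_pp[OF _ e1, of c] diff_mem_pp[of "c + e" 1 e] e1 by auto
  show "unit_term (c + e) = unit_term c"
    using eigen_avg_translate[OF _ e] units_o_iff[OF c] iff by (simp add: unit_term_def)
qed

lemma units_o_of_reps:
  "c \<in> S \<Longrightarrow> c \<notin> pp val 1 \<Longrightarrow> c \<in> units_o val"
  using units_o_iff is_repsD(2)[OF S] by blast

lemma lift_congruent: "lift - v0 \<in> N"
proof -
  define P where "P c \<longleftrightarrow> c - 1 \<in> pp val K" for c
  obtain c1 where c1: "c1 \<in> S" "1 - c1 \<in> pp val K" using is_repsD(3)[OF S one_mem_pp_0] by blast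
  have "{c\<in>S. P c} = {c1}"
    using is_reps_unique[OF S one_mem_pp_0 _ c1(1)] c1 diff_mem_pp_commute
    unfolding P_def by blast
  then have v0: "(\<Sum>c\<in>S. if P c then v0 else 0) = v0"
    using sum.inter_filter[OF is_repsD(1)[OF S], of "\<lambda>_. v0" P] by simp
  have "unit_term c - (if P c then v0 else 0) \<in> N" if c: "c \<in> S" for c
  proof (cases "c \<in> pp val 1")
    case True
    have "\<not> P c"
    proof
      assume "P c"
      then have "c - 1 \<in> pp val 1" using pp_mono[OF K] by (simp add: P_def)
      then have "c - (c - 1) \<in> pp val 1" using diff_mem_pp[OF True] by blast
      then show False using one_not_mem_pp_1 by simp
    qed
    then show ?thesis using True span_zero by (simp add: unit_term_def ZJ_kernel_span)
  next
    case False
    have "eigen_avg (1 + (c - 1)) = eigen_avg 1" if "P c"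
      using eigen_avg_translate[of 1 "c - 1"] one_plus_mem_units_o[of 0] that by (simp add: P_def)
    then show ?thesis
      using False eigen_avg_1_congruent eigen_avg_in_ZJ_kernel[OF units_o_of_reps[OF c False]]
      by (simp add: unit_term_def P_def)
  qed
  then have "(\<Sum>c\<in>S. unit_term c - (if P c then v0 else 0)) \<in> N"
    unfolding ZJ_kernel_span by (rule span_sum)
  then show ?thesis using v0 by (simp add: lift_def sum_subtractf)
qed

lemma Z_lift: "y \<in> pp val 0 \<Longrightarrow> Z y lift = lift"
proof -
  assume y: "y \<in> pp val 0"
  have "Z y (unit_term c) = unit_term c" if "c \<in> S" for c
  proof (cases "c \<in> pp val 1")
    case False
    then have c: "c \<in> units_o val" using units_o_of_reps that by blast
    have "\<psi> (c * y) = 1" using mult_mem_pp[OF units_o_mem_pp_0[OF c] y] psi_pp_0 by simp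
    then show ?thesis
      using Z_eigen_avg[OF c pp_mono[OF _ y]] K False by (simp add: unit_term_def)
  qed (simp add: unit_term_def Z_linear)
  then show ?thesis by (simp add: lift_def Z_linear)
qed

lemma sum_Z_lift: "is_reps val (-1) 0 T \<Longrightarrow> (\<Sum>t\<in>T. Z t lift) = 0"
proof -
  assume T: "is_reps val (-1) 0 T"
  have "(\<Sum>t\<in>T. Z t (unit_term c)) = 0" if "c \<in> S" for c
  proof (cases "c \<in> pp val 1")
    case False
    then have c: "c \<in> units_o val" using units_o_of_reps that by blast
    have "t \<in> pp val (-K)" if "t \<in> T" for t
      using pp_mono[of "-K" "-1" t] K is_repsD(2)[OF T] that by auto
    then have "(\<Sum>t\<in>T. Z t (unit_term c)) = sc (\<Sum>t\<in>T. \<psi> (t * c)) (eigen_avg c)"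
      using Z_eigen_avg[OF c] False by (simp add: unit_term_def mult.commute scale_sum_left)
    also have "(\<Sum>t\<in>T. \<psi> (t * c)) = 0"
      using character_sum[OF T, of c] units_o_mem_pp_0[OF c] False by simp
    finally show ?thesis by simp
  qed (simp add: unit_term_def Z_linear)
  then show ?thesis by (simp add: lift_def Z_linear sum.swap[of _ S])
qed

lemma D_lift: "c \<in> units_o val \<Longrightarrow> D c lift = lift"
proof -
  assume c: "c \<in> units_o val"
  have c0: "c \<noteq> 0" using units_o_nonzero[OF c] .
  have "D c (unit_term b) = unit_term (c * b)" if "b \<in> S" for b
  proof (cases "b \<in> pp val 1")
    case True
    then show ?thesis using units_o_mult_mem_pp_iff[OF c] c0 by (simp add: unit_term_def D_linear)
  next
    case False
    have "D c (eigen_avg b) = eigen_avg (c * b)"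
      using c0 units_o_nonzero[OF units_o_of_reps[OF that False]]
      by (simp add: eigen_avg_def D_linear D_mult)
    then show ?thesis using False units_o_mult_mem_pp_iff[OF c] by (simp add: unit_term_def)
  qed
  then have "D c lift = (\<Sum>b\<in>S. unit_term (c * b))" by (simp add: lift_def D_linear[OF c0])
  also have "\<dots> = lift" unfolding lift_def using sum_is_reps_unit_scale[OF S c coset_const_unit_term] .
  finally show ?thesis .
qed

end

lemma (in ZJ_setting) ZJ_lift_exists:
  "\<exists>v. v - v0 \<in> N \<and> (\<forall>y\<in>pp val 0. Z y v = v) \<and>
     (\<forall>T. is_reps val (-1) 0 T \<longrightarrow> (\<Sum>t\<in>T. Z t v) = 0) \<and> (\<forall>c\<in>units_o val. D c v = v)"
proof -
  obtain K where K: "1 \<le> K" "\<forall>y\<in>pp val K. Z y v0 = v0" "\<forall>e. e - 1 \<in> pp val K \<longrightarrow> D e v0 = v0"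
    using smooth_Z_D[of v0] by blast
  obtain X where X: "is_reps val (-K) K X" using is_reps_exists[of "-K" K] K by auto
  obtain S where S: "is_reps val 0 K S" using is_reps_exists[of 0 K] K by auto
  interpret ZJ_lift val sc \<psi> \<pi> v0 K X S
    by unfold_locales (use K X S in auto)
  show ?thesis using lift_congruent Z_lift sum_Z_lift D_lift by blast
qed

theorem proposition7p2p3:
  fixes val :: "'a::field_char_0 \<Rightarrow> int"
    and \<psi> :: "'a \<Rightarrow> complex"
    and sc :: "complex \<Rightarrow> 'v::ab_group_add \<Rightarrow> 'v"
    and \<pi> :: "'a ^ 4 ^ 4 \<Rightarrow> 'v \<Rightarrow> 'v"
  assumes "nonarch_local_field val"
    and "conductor_o_char val \<psi>"
    and "smooth_rep val sc \<pi>"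
    and "w \<in> ZJ_coinv sc \<pi> \<psi>"
  shows "\<exists>!v. ZJ_proj sc \<pi> \<psi> v = w
             \<and> (\<forall>x\<in>pp val 0. \<pi> (zmat x) v = v)
             \<and> haar_int val sc (-1) (\<lambda>x. \<pi> (zmat x) v) = 0
             \<and> (\<forall>c\<in>units_o val. \<pi> (dmat c) v = v)"
proof -
  have "vector_space sc" using assms(3) unfolding smooth_rep_def by blast
  then interpret ZJ_setting val sc \<psi> \<pi>
    using assms(1-3) by unfold_locales (auto simp: vector_space_def module_def)
  obtain v0 where w: "w = ZJ_proj sc \<pi> \<psi> v0" using assms(4) unfolding ZJ_coinv_def by blast
  obtain T1 where T1: "is_reps val (-1) 0 T1" using is_reps_exists[of "-1" 0] by auto
  have conditions_iff: "ZJ_proj sc \<pi> \<psi> v = w \<and> (\<forall>x\<in>pp val 0. Z x v = v)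
      \<and> haar_int val sc (-1) (\<lambda>x. Z x v) = 0 \<and> (\<forall>c\<in>units_o val. D c v = v)
    \<longleftrightarrow> v - v0 \<in> N \<and> (\<forall>x\<in>pp val 0. Z x v = v)
      \<and> (\<Sum>t\<in>T1. Z t v) = 0 \<and> (\<forall>c\<in>units_o val. D c v = v)" for v
    using haar_int_Z_eq_sum[OF _ T1, of v] by (auto simp: w ZJ_proj_eq_iff)
  obtain v where v: "v - v0 \<in> N" "\<forall>x\<in>pp val 0. Z x v = v"
      "\<forall>T. is_reps val (-1) 0 T \<longrightarrow> (\<Sum>t\<in>T. Z t v) = 0" "\<forall>c\<in>units_o val. D c v = v"
    using ZJ_lift_exists[of v0] by blast
  have "v' = v" if "v' - v0 \<in> N" "\<forall>x\<in>pp val 0. Z x v' = v'"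
      "(\<Sum>t\<in>T1. Z t v') = 0" "\<forall>c\<in>units_o val. D c v' = v'" for v'
  proof -
    have "v' - v \<in> N"
      using span_diff[of "v' - v0" _ "v - v0"] that(1) v(1) by (simp add: ZJ_kernel_span)
    then show ?thesis
      using ZJ_kernel_invariant_eq_0[OF _ _ _ T1, of "v' - v"] that v T1 units_o_nonzero
      by (simp add: Z_linear D_linear sum_subtractf)
  qed
  then show ?thesis unfolding conditions_iff using v T1 by blast
qed

end
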